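(* Let $K$ be a local field of characteristic $p>0$, and let $L$ be any totally ramified and purely inseparable extension of $K$ of degree $p^n$. Let $b$ be an integer with $0<b<p^n$ and $\gcd(b,p)=1$. Then there is an action of $\mathcal{A}(n)$ on $L$ which makes $L$ into an $\mathcal{A}(n)$-Hopf Galois extension of $K$, and which admits an $\mathcal{A}(n)$-scaffold on $L$ with all shift parameters equal to $b$ (i.e. $b_1=\dots=b_n=b$) and with tolerance $\mathfrak{T}=\infty$.
   Context: A local field here is a field complete with respect to a discrete valuation whose residue field has characteristic $p$; $v_K,v_L$ are normalized valuations, $\mathfrak{O}_K$ the valuation ring of $K$, $\mathfrak{P}_L$ the maximal ideal of $\mathfrak{O}_L$. The divided power $K$-Hopf algebra $\mathcal{A}(n)$ is the $K$-vector space with basis $t_0,\dots,t_{p^n-1}$, multiplication $t_it_j=\binom{i+j}{j}t_{i+j}$ if $i+j<p^n$ and $0$ otherwise, $t_0$ the identity, comultiplication $\Delta(t_r)=\sum_{j=0}^r t_j\otimes t_{r-j}$, counit $\epsilon(t_r)=\delta_{0,r}$, antipode $t_r\mapsto(-1)^rt_r$. For a $K$-Hopf algebra $H$, $L$ is an $H$-module algebra if $H$ acts $K$-linearly on $L$ with $h(st)=\mu(\Delta(h)(s\otimes t))$ ($\mu$ the multiplication of $L$) and $h\cdot1=\epsilon(h)1$; $L/K$ is $H$-Hopf Galois if moreover the map $L\otimes_K H\to\mathrm{End}_K(L)$, $(s\otimes h)\mapsto(x\mapsto s\,h(x))$, is bijective. Scaffolds: let $\mathbb{S}_{p^n}=\{0,\dots,p^n-1\}$,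 $s=\sum_{i=1}^n s_{(n-i)}p^{n-i}$ with digits in $\{0,\dots,p-1\}$; for integers $b_1,\dots,b_n$ prime to $p$, $\mathfrak{b}(s)=\sum_i s_{(n-i)}p^{n-i}b_i$ and $\mathfrak{a}(t)\in\mathbb{S}_{p^n}$ ($t\in\mathbb{Z}$) is the unique element with $\mathfrak{b}(\mathfrak{a}(t))\equiv-t\pmod{p^n}$. For a $K$-algebra $A$ of dimension $p^n$ acting $K$-linearly on $L$ (with $[L:K]=p^n$ totally ramified), an $A$-scaffold of tolerance $\infty$ with shift parameters $b_1,\dots,b_n$ consists of (i) $\lambda_t\in L$ ($t\in\mathbb{Z}$) with $v_L(\lambda_t)=t$ and $\lambda_{t_1}\lambda_{t_2}^{-1}\in K$ whenever $t_1\equiv t_2\pmod{p^n}$, and (ii) $\Psi_1,\dots,\Psi_n\in A$ with $\Psi_i\cdot1=0$ such that for each $i,t$ there is $u_{i,t}\in\mathfrak{O}_K^\times$ with $\Psi_i\cdot\lambda_t=u_{i,t}\lambda_{t+p^{n-i}b_i}$ if $\mathfrak{a}(t)_{(n-i)}\ge1$ and $\Psi_i\cdot\lambda_t=0$ if $\mathfrak{a}(t)_{(n-i)}=0$. *)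

theory Defs
  imports "HOL-Computational_Algebra.Primes"
begin

text \<open>The top field L is the whole type 'a; K is a subfield given as a set.
  v is the normalized valuation v_L of L on nonzero elements (its value at 0 is irrelevant,
  standing for infinity). The normalized valuation of K is v_K = v_L / p^n on K.\<close>

definition is_subfield :: "'a::field set \<Rightarrow> bool" where
  "is_subfield K \<longleftrightarrow> 0 \<in> K \<and> 1 \<in> K \<and>
     (\<forall>x\<in>K. \<forall>y\<in>K. x + y \<in> K \<and> x * y \<in> K) \<and>
     (\<forall>x\<in>K. - x \<in> K \<and> inverse x \<in> K)"

definition normalized_discrete_valuation :: "('a::field \<Rightarrow> int) \<Rightarrow> bool" where
  "normalized_discrete_valuation v \<longleftrightarrow>
     (\<forall>x y. x \<noteq> 0 \<longrightarrow> y \<noteq> 0 \<longrightarrow> v (x * y) = v x + v y) \<and>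
     (\<forall>x y. x \<noteq> 0 \<longrightarrow> y \<noteq> 0 \<longrightarrow> x + y \<noteq> 0 \<longrightarrow> v (x + y) \<ge> min (v x) (v y)) \<and>
     (\<forall>k. \<exists>x. x \<noteq> 0 \<and> v x = k)"

definition val_cauchy :: "('a::field \<Rightarrow> int) \<Rightarrow> (nat \<Rightarrow> 'a) \<Rightarrow> bool" where
  "val_cauchy v X \<longleftrightarrow>
     (\<forall>M. \<exists>N. \<forall>m\<ge>N. \<forall>k\<ge>N. X m = X k \<or> v (X m - X k) \<ge> M)"

definition val_converges :: "('a::field \<Rightarrow> int) \<Rightarrow> (nat \<Rightarrow> 'a) \<Rightarrow> 'a \<Rightarrow> bool" where
  "val_converges v X y \<longleftrightarrow> (\<forall>M. \<exists>N. \<forall>m\<ge>N. X m = y \<or> v (X m - y) \<ge> M)"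

definition val_complete :: "('a::field \<Rightarrow> int) \<Rightarrow> 'a set \<Rightarrow> bool" where
  "val_complete v K \<longleftrightarrow>
     (\<forall>X. (\<forall>m. X m \<in> K) \<longrightarrow> val_cauchy v X \<longrightarrow> (\<exists>y\<in>K. val_converges v X y))"

definition ext_degree_eq :: "'a::field set \<Rightarrow> nat \<Rightarrow> bool" where
  "ext_degree_eq K d \<longleftrightarrow>
     (\<exists>e :: nat \<Rightarrow> 'a. \<forall>x. \<exists>!c :: nat \<Rightarrow> 'a.
        (\<forall>i. c i \<in> K) \<and> (\<forall>i\<ge>d. c i = 0) \<and> x = (\<Sum>i<d. c i * e i))"

definition totally_ramified_index :: "('a::field \<Rightarrow> int) \<Rightarrow> 'a set \<Rightarrow> nat \<Rightarrow> bool" where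
  "totally_ramified_index v K d \<longleftrightarrow> {v x | x. x \<in> K \<and> x \<noteq> 0} = {int d * k | k. True}"

definition purely_inseparable :: "'a::field set \<Rightarrow> nat \<Rightarrow> bool" where
  "purely_inseparable K p \<longleftrightarrow> (\<forall>x::'a. \<exists>m. x ^ (p ^ m) \<in> K)"

definition K_linear :: "'a::field set \<Rightarrow> ('a \<Rightarrow> 'a) \<Rightarrow> bool" where
  "K_linear K f \<longleftrightarrow> (\<forall>x y. f (x + y) = f x + f y) \<and> (\<forall>c\<in>K. \<forall>x. f (c * x) = c * f x)"

text \<open>An action of A(n) on L, given by the operators T i = action of the basis element t_i
  (i < p^n); an element of A(n) is a coefficient vector c (c j in K, j < p^n) acting by
  sum c j * T j.\<close>
definition An_action :: "'a::field set \<Rightarrow> nat \<Rightarrow> nat \<Rightarrow> (nat \<Rightarrow> 'a \<Rightarrow> 'a) \<Rightarrow> bool" where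
  "An_action K p n T \<longleftrightarrow>
     (\<forall>i<p^n. K_linear K (T i)) \<and>
     (\<forall>x. T 0 x = x) \<and>
     (\<forall>i<p^n. \<forall>j<p^n. \<forall>x. T i (T j x) =
         (if i + j < p^n then of_nat ((i + j) choose j) * T (i + j) x else 0))"

definition An_elem_act :: "nat \<Rightarrow> nat \<Rightarrow> (nat \<Rightarrow> 'a \<Rightarrow> 'a) \<Rightarrow> (nat \<Rightarrow> 'a) \<Rightarrow> 'a \<Rightarrow> 'a::field" where
  "An_elem_act p n T c x = (\<Sum>j<p^n. c j * T j x)"

text \<open>L is an A(n)-module algebra (conditions on the basis; the rest follows by linearity).\<close>
definition An_module_algebra :: "'a::field set \<Rightarrow> nat \<Rightarrow> nat \<Rightarrow> (nat \<Rightarrow> 'a \<Rightarrow> 'a) \<Rightarrow> bool" where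
  "An_module_algebra K p n T \<longleftrightarrow> An_action K p n T \<and>
     (\<forall>r<p^n. \<forall>s t. T r (s * t) = (\<Sum>j\<le>r. T j s * T (r - j) t)) \<and>
     (\<forall>r<p^n. T r 1 = (if r = 0 then 1 else 0))"

text \<open>Hopf Galois: L (x)_K A(n) -> End_K(L), s (x) t_i |-> (x |-> s * T i x), is bijective.
  L (x)_K A(n) is the free L-module on 1 (x) t_i, i < p^n.\<close>
definition An_hopf_galois :: "'a::field set \<Rightarrow> nat \<Rightarrow> nat \<Rightarrow> (nat \<Rightarrow> 'a \<Rightarrow> 'a) \<Rightarrow> bool" where
  "An_hopf_galois K p n T \<longleftrightarrow> An_module_algebra K p n T \<and>
     (\<forall>f. K_linear K f \<longrightarrow> (\<exists>s. \<forall>x. f x = (\<Sum>i<p^n. s i * T i x))) \<and>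
     (\<forall>s s'. (\<forall>x. (\<Sum>i<p^n. s i * T i x) = (\<Sum>i<p^n. s' i * T i x))
        \<longrightarrow> (\<forall>i<p^n. s i = s' i))"

definition digit :: "nat \<Rightarrow> nat \<Rightarrow> nat \<Rightarrow> nat" where
  "digit p k s = (s div p ^ k) mod p"

definition frak_b :: "nat \<Rightarrow> nat \<Rightarrow> (nat \<Rightarrow> int) \<Rightarrow> nat \<Rightarrow> int" where
  "frak_b p n bs s = (\<Sum>i=1..n. int (digit p (n - i) s) * int (p ^ (n - i)) * bs i)"

definition frak_a :: "nat \<Rightarrow> nat \<Rightarrow> (nat \<Rightarrow> int) \<Rightarrow> int \<Rightarrow> nat" where
  "frak_a p n bs t = (THE s. s < p ^ n \<and> frak_b p n bs s mod int (p ^ n) = (- t) mod int (p ^ n))"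

text \<open>An A(n)-scaffold of tolerance infinity with shift parameters bs 1, ..., bs n, for the
  action T.  Psi i is the coefficient vector (in K) of an element of A(n).\<close>
definition An_scaffold_inf ::
  "'a::field set \<Rightarrow> ('a \<Rightarrow> int) \<Rightarrow> nat \<Rightarrow> nat \<Rightarrow> (nat \<Rightarrow> 'a \<Rightarrow> 'a) \<Rightarrow> (nat \<Rightarrow> int)
     \<Rightarrow> (int \<Rightarrow> 'a) \<Rightarrow> (nat \<Rightarrow> nat \<Rightarrow> 'a) \<Rightarrow> bool" where
  "An_scaffold_inf K v p n T bs lam Psi \<longleftrightarrow>
     (\<forall>i\<in>{1..n}. coprime (bs i) (int p)) \<and>
     (\<forall>t. lam t \<noteq> 0 \<and> v (lam t) = t) \<and>
     (\<forall>t1 t2. t1 mod int (p ^ n) = t2 mod int (p ^ n) \<longrightarrow> lam t1 * inverse (lam t2) \<in> K) \<and>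
     (\<forall>i\<in>{1..n}. (\<forall>j. Psi i j \<in> K) \<and> An_elem_act p n T (Psi i) 1 = 0) \<and>
     (\<forall>i\<in>{1..n}. \<forall>t.
        (digit p (n - i) (frak_a p n bs t) \<ge> 1 \<longrightarrow>
           (\<exists>u\<in>K. u \<noteq> 0 \<and> v u = 0 \<and>
              An_elem_act p n T (Psi i) (lam t) = u * lam (t + int (p ^ (n - i)) * bs i))) \<and>
        (digit p (n - i) (frak_a p n bs t) = 0 \<longrightarrow>
           An_elem_act p n T (Psi i) (lam t) = 0))"

end

theory Submission
  imports Defs "HOL-Computational_Algebra.Computational_Algebra"
begin

text \<open>Choose a uniformizer \<open>\<pi>\<close> of \<open>L\<close>. Pure inseparability together with \<open>[L:K] = p^n\<close>
  forces \<open>\<pi>^p^n \<in> K\<close>: the minimal polynomial of \<open>\<pi>\<close> has degree \<open>p^n\<close> and divides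
  \<open>(X - \<pi>)^p^M = X^p^M - \<pi>^p^M\<close>. Put \<open>x = \<pi>^-b\<close>. The powers \<open>x^j\<close>, \<open>j < p^n\<close>, have
  valuations \<open>-jb\<close> pairwise incongruent modulo \<open>p^n\<close>, so they form a \<open>K\<close>-basis of \<open>L\<close>, and
  \<open>x^p^n \<in> K\<close>. Let \<open>t_i\<close> act as the \<open>i\<close>-th Hasse derivative \<open>x^j \<mapsto> (j choose i) x^(j-i)\<close>.
  Vandermonde's identity gives the module algebra axioms, and on the basis \<open>x^k\<close> the action is
  unitriangular, which gives the Hopf Galois property. Finally \<open>\<lambda>_t = x^\<a>(t) (\<pi>^p^n)^e(t)\<close>
  has valuation \<open>t\<close>, and \<open>\<Psi>_i = t_(p^(n-i))\<close> maps it to \<open>(\<a>(t) choose p^(n-i)) \<lambda>_(t + p^(n-i) b)\<close>.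
  By Lucas' theorem this binomial coefficient is the \<open>(n-i)\<close>-th base-\<open>p\<close> digit of \<open>\<a>(t)\<close>,
  a unit whenever it is nonzero.\<close>

section \<open>Binomial coefficients in characteristic \<open>p\<close>\<close>

lemma prime_dvd_choose_prime_power:
  assumes "prime (p::nat)" "0 < j" "j < p ^ m"
  shows "p dvd (p ^ m choose j)"
proof (rule ccontr)
  assume "\<not> p dvd (p ^ m choose j)"
  then have "coprime (p ^ m) (p ^ m choose j)"
    using assms(1) by (simp add: prime_imp_coprime coprime_commute)
  moreover have "p ^ m dvd j * (p ^ m choose j)"
    using times_binomial_minus1_eq[OF assms(2), of "p ^ m"] by simp
  ultimately have "p ^ m dvd j"
    using coprime_dvd_mult_left_iff by blast
  with assms(2,3) show False
    by (simp add: nat_dvd_not_less)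
qed

lemma of_nat_vandermonde:
  "(of_nat (m + n choose k) :: 'a::comm_semiring_1) =
     (\<Sum>i\<le>k. of_nat (m choose i) * of_nat (n choose (k - i)))"
  by (simp only: vandermonde[symmetric] of_nat_sum of_nat_mult)

lemma sum_atMost_two_terms:
  fixes N :: nat
  assumes "\<And>k. 0 < k \<Longrightarrow> k < N \<Longrightarrow> f k = 0" "0 < N"
  shows "(\<Sum>k\<le>N. f k) = f 0 + (f N :: 'b::comm_monoid_add)"
proof -
  have "(\<Sum>k\<le>N. f k) = (\<Sum>k\<in>{0, N}. f k)"
    by (rule sum.mono_neutral_right) (auto intro: assms(1))
  then show ?thesis
    using assms(2) by simp
qed

context
  fixes p :: nat
  assumes prime: "prime p" and char: "of_nat p = (0::'a::comm_ring_1)"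
begin

lemma of_nat_mod_char: "(of_nat (q mod p) :: 'a) = of_nat q"
proof -
  have "(of_nat q :: 'a) = of_nat (q div p) * of_nat p + of_nat (q mod p)"
    by (metis div_mult_mod_eq of_nat_add of_nat_mult)
  then show ?thesis
    using char by simp
qed

lemma of_nat_choose_prime_power_eq_0:
  assumes "0 < j" "j < p ^ m"
  shows "(of_nat (p ^ m choose j) :: 'a) = 0"
proof -
  obtain k where "p ^ m choose j = p * k"
    using prime_dvd_choose_prime_power[OF prime assms] by (elim dvdE)
  then show ?thesis
    using char by simp
qed

lemma of_nat_choose_multiple_eq_0:
  "0 < l \<Longrightarrow> l < p ^ m \<Longrightarrow> (of_nat (q * p ^ m choose l) :: 'a) = 0"
proof (induction q arbitrary: l)
  case 0
  then show ?case by (simp add: binomial_eq_0)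
next
  case (Suc q)
  have "(of_nat (Suc q * p ^ m choose l) :: 'a) =
      (\<Sum>k\<le>l. of_nat (q * p ^ m choose k) * of_nat (p ^ m choose (l - k)))"
    using of_nat_vandermonde[of "q * p ^ m" "p ^ m" l] by (simp add: add.commute)
  also have "\<dots> = 0"
  proof (rule sum.neutral, intro ballI)
    fix k assume "k \<in> {..l}"
    then show "(of_nat (q * p ^ m choose k) :: 'a) * of_nat (p ^ m choose (l - k)) = 0"
      using Suc of_nat_choose_prime_power_eq_0[of l m] by (cases "k = 0") auto
  qed
  finally show ?case .
qed

lemma of_nat_choose_multiple_prime_power:
  "(of_nat (q * p ^ m choose p ^ m) :: 'a) = of_nat q"
proof (induction q)
  case 0
  then show ?case by (simp add: binomial_eq_0 prime_gt_0_nat[OF prime])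
next
  case (Suc q)
  have "(of_nat (Suc q * p ^ m choose p ^ m) :: 'a) =
      (\<Sum>k\<le>p ^ m. of_nat (q * p ^ m choose k) * of_nat (p ^ m choose (p ^ m - k)))"
    using of_nat_vandermonde[of "q * p ^ m" "p ^ m" "p ^ m"] by (simp add: add.commute)
  also have "\<dots> = 1 + of_nat q"
    using Suc of_nat_choose_multiple_eq_0[of _ m q] prime_gt_0_nat[OF prime]
    by (subst sum_atMost_two_terms) auto
  finally show ?case
    by simp
qed

lemma of_nat_choose_add_multiple:
  assumes "r < p ^ n"
  shows "(of_nat (q * p ^ n + m choose r) :: 'a) = of_nat (m choose r)"
proof -
  have "(of_nat (q * p ^ n + m choose r) :: 'a) =
      (\<Sum>k\<le>r. of_nat (q * p ^ n choose k) * of_nat (m choose (r - k)))"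
    by (rule of_nat_vandermonde)
  also have "\<dots> = (\<Sum>k\<in>{0}. of_nat (q * p ^ n choose k) * of_nat (m choose (r - k)))"
    using assms of_nat_choose_multiple_eq_0[of _ n q] by (intro sum.mono_neutral_right) auto
  finally show ?thesis
    by simp
qed

lemma of_nat_choose_prime_power_digit:
  "(of_nat (s choose p ^ m) :: 'a) = of_nat (digit p m s)"
proof -
  define q r where "q = s div p ^ m" and "r = s mod p ^ m"
  have s: "s = q * p ^ m + r"
    by (metis q_def r_def div_mult_mod_eq)
  have r: "r < p ^ m"
    using prime_gt_0_nat[OF prime] by (simp add: r_def)
  have "(of_nat (s choose p ^ m) :: 'a) =
      (\<Sum>k\<le>p ^ m. of_nat (q * p ^ m choose k) * of_nat (r choose (p ^ m - k)))"
    unfolding s by (rule of_nat_vandermonde)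
  also have "\<dots> = of_nat q"
    using r of_nat_choose_multiple_eq_0[of _ m q] prime_gt_0_nat[OF prime]
    by (subst sum_atMost_two_terms) (auto simp: binomial_eq_0 of_nat_choose_multiple_prime_power)
  also have "\<dots> = of_nat (digit p m s)"
    by (simp add: digit_def q_def of_nat_mod_char)
  finally show ?thesis .
qed

lemma add_power_prime_power: "(a + b) ^ (p ^ m) = a ^ (p ^ m) + (b ^ (p ^ m) :: 'a)"
proof -
  have "(a + b) ^ (p ^ m) = (\<Sum>k\<le>p ^ m. of_nat (p ^ m choose k) * a ^ k * b ^ (p ^ m - k))"
    by (rule binomial_ring)
  also have "\<dots> = b ^ (p ^ m) + a ^ (p ^ m)"
    using of_nat_choose_prime_power_eq_0[of _ m] prime_gt_0_nat[OF prime]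
    by (subst sum_atMost_two_terms) auto
  finally show ?thesis
    by (simp add: add.commute)
qed

lemma uminus_power_prime_power: "(- b) ^ (p ^ m) = - (b ^ (p ^ m) :: 'a)"
  using add_power_prime_power[of b "- b" m] prime_gt_0_nat[OF prime]
  by (simp add: eq_neg_iff_add_eq_0 add.commute power_0_left)

end

lemma linear_power_prime_power:
  fixes c :: "'a::comm_ring_1"
  assumes "prime p" "of_nat p = (0::'a)"
  shows "[:- c, 1:] ^ (p ^ m) = monom 1 (p ^ m) - [:c ^ (p ^ m):]"
proof -
  have char: "of_nat p = (0::'a poly)"
    using assms(2) by (simp add: of_nat_poly)
  have "[:- c, 1:] ^ (p ^ m) = (monom 1 1 + - [:c:]) ^ (p ^ m)"
    by (simp add: monom_Suc monom_0)
  also have "\<dots> = monom 1 (p ^ m) - [:c:] ^ (p ^ m)"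
    unfolding add_power_prime_power[OF assms(1) char] uminus_power_prime_power[OF assms(1) char]
    by (simp add: monom_power)
  finally show ?thesis
    by (simp add: poly_const_pow)
qed

section \<open>Discrete valuations\<close>

context
  fixes v :: "'a::field \<Rightarrow> int"
  assumes val: "normalized_discrete_valuation v"
begin

lemma val_mult: "x \<noteq> 0 \<Longrightarrow> y \<noteq> 0 \<Longrightarrow> v (x * y) = v x + v y"
  using val unfolding normalized_discrete_valuation_def by blast

lemma val_add: "x \<noteq> 0 \<Longrightarrow> y \<noteq> 0 \<Longrightarrow> x + y \<noteq> 0 \<Longrightarrow> min (v x) (v y) \<le> v (x + y)"
  using val unfolding normalized_discrete_valuation_def by blast

lemma val_one: "v 1 = 0"
  using val_mult[of 1 1] by simp

lemma val_uminus: "x \<noteq> 0 \<Longrightarrow> v (- x) = v x"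
proof -
  have "v (-1) = 0"
    using val_mult[of "-1" "-1"] val_one by simp
  then show "x \<noteq> 0 \<Longrightarrow> v (- x) = v x"
    using val_mult[of "-1" x] by simp
qed

lemma val_inverse: "x \<noteq> 0 \<Longrightarrow> v (inverse x) = - v x"
  using val_mult[of x "inverse x"] val_one by simp

lemma val_power: "x \<noteq> 0 \<Longrightarrow> v (x ^ k) = int k * v x"
  by (induction k) (auto simp: val_one val_mult algebra_simps)

lemma val_power_int: "x \<noteq> 0 \<Longrightarrow> v (x powi k) = k * v x"
  by (cases "k \<ge> 0") (simp_all add: power_int_def val_power val_inverse)

lemma val_add_eq_min:
  assumes "x \<noteq> 0" "y \<noteq> 0" "v x \<noteq> v y"
  shows "x + y \<noteq> 0 \<and> v (x + y) = min (v x) (v y)"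
proof -
  have nz: "x + y \<noteq> 0"
  proof
    assume "x + y = 0"
    then have "y = - x"
      by (simp add: eq_neg_iff_add_eq_0 add.commute)
    then show False
      using assms val_uminus by simp
  qed
  have "min (v x) (v y) \<le> v (x + y)"
    using val_add assms nz by blast
  moreover have "min (v (x + y)) (v y) \<le> v x"
    using val_add[of "x + y" "- y"] nz assms val_uminus[of y] by simp
  moreover have "min (v (x + y)) (v x) \<le> v y"
    using val_add[of "x + y" "- x"] nz assms val_uminus[of x] by simp
  ultimately show ?thesis
    using nz assms(3) by linarith
qed

lemma val_sum_eq_Min:
  assumes "finite S" "S \<noteq> {}" "\<forall>i\<in>S. f i \<noteq> 0" "inj_on (\<lambda>i. v (f i)) S"
  shows "sum f S \<noteq> 0 \<and> v (sum f S) = Min ((\<lambda>i. v (f i)) ` S)"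
  using assms
proof (induction S rule: finite_ne_induct)
  case (singleton x)
  then show ?case by simp
next
  case (insert x F)
  then have IH: "sum f F \<noteq> 0 \<and> v (sum f F) = Min ((\<lambda>i. v (f i)) ` F)"
    by (simp add: inj_on_insert)
  have "v (f x) \<notin> (\<lambda>i. v (f i)) ` F"
    using insert.prems(2) insert.hyps(3) unfolding inj_on_def by blast
  then have "v (f x) \<noteq> v (sum f F)"
    using IH Min_in[of "(\<lambda>i. v (f i)) ` F"] insert.hyps(1,2) by force
  then have "f x + sum f F \<noteq> 0 \<and> v (f x + sum f F) = min (v (f x)) (v (sum f F))"
    using val_add_eq_min IH insert.prems(1) by blast
  then show ?case
    using IH insert.hyps by simp
qed

lemma sum_nonzero_if_val_inj:
  assumes "finite S" "\<exists>i\<in>S. f i \<noteq> 0" "inj_on (\<lambda>i. v (f i)) {i\<in>S. f i \<noteq> 0}"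
  shows "sum f S \<noteq> 0"
proof -
  have "sum f S = sum f {i\<in>S. f i \<noteq> 0}"
    by (rule sum.mono_neutral_right[OF assms(1)]) auto
  moreover have "sum f {i\<in>S. f i \<noteq> 0} \<noteq> 0"
    using val_sum_eq_Min[of "{i\<in>S. f i \<noteq> 0}"] assms by auto
  ultimately show ?thesis
    by simp
qed

lemma val_of_nat_nonneg: "of_nat m \<noteq> (0::'a) \<Longrightarrow> 0 \<le> v (of_nat m)"
proof (induction m)
  case 0
  then show ?case by simp
next
  case (Suc m)
  show ?case
  proof (cases "of_nat m = (0::'a)")
    case True
    then show ?thesis by (simp add: val_one)
  next
    case False
    have "min (v (of_nat m :: 'a)) (v 1) \<le> v ((of_nat m :: 'a) + 1)"
      using val_add[OF False one_neq_zero] Suc.prems by (simp add: add.commute)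
    then show ?thesis
      using Suc.IH[OF False] val_one by (simp add: add.commute)
  qed
qed

lemma val_of_nat_unit:
  assumes "prime p" "of_nat p = (0::'a)" "0 < r" "r < p"
  shows "(of_nat r :: 'a) \<noteq> 0 \<and> v (of_nat r :: 'a) = 0"
proof -
  have "coprime r p"
    using assms(1,3,4) by (simp add: prime_imp_coprime coprime_commute nat_dvd_not_less)
  then obtain a c where "r * a = p * c + 1"
    using bezout_nat[of r p] assms(3) by (auto simp: coprime_iff_gcd_eq_1)
  then have "(of_nat (r * a) :: 'a) = of_nat (p * c + 1)"
    by (simp only:)
  then have "(of_nat r :: 'a) * of_nat a = 1"
    using assms(2) by simp
  moreover from this have "(of_nat r :: 'a) \<noteq> 0" "(of_nat a :: 'a) \<noteq> 0"
    by auto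
  moreover have "v (of_nat r) + v (of_nat a) = 0"
    using val_mult[of "of_nat r" "of_nat a"] val_one calculation by simp
  ultimately show ?thesis
    using val_of_nat_nonneg[of r] val_of_nat_nonneg[of a] by simp
qed

end

section \<open>Linear algebra over a subfield\<close>

context
  fixes K :: "'a::field set"
  assumes subfield: "is_subfield K"
begin

lemma subfield_zero: "0 \<in> K" and subfield_one: "1 \<in> K"
  using subfield unfolding is_subfield_def by auto

lemma subfield_add: "x \<in> K \<Longrightarrow> y \<in> K \<Longrightarrow> x + y \<in> K"
  and subfield_mult: "x \<in> K \<Longrightarrow> y \<in> K \<Longrightarrow> x * y \<in> K"
  and subfield_uminus: "x \<in> K \<Longrightarrow> - x \<in> K"
  and subfield_inverse: "x \<in> K \<Longrightarrow> inverse x \<in> K"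
  using subfield unfolding is_subfield_def by auto

lemma subfield_diff: "x \<in> K \<Longrightarrow> y \<in> K \<Longrightarrow> x - y \<in> K"
  using subfield_add subfield_uminus by (metis diff_conv_add_uminus)

lemma subfield_divide: "x \<in> K \<Longrightarrow> y \<in> K \<Longrightarrow> x / y \<in> K"
  using subfield_mult subfield_inverse by (metis divide_inverse)

lemma subfield_power: "x \<in> K \<Longrightarrow> x ^ k \<in> K"
  by (induction k) (auto simp: subfield_one subfield_mult)

lemma subfield_power_int: "x \<in> K \<Longrightarrow> x powi k \<in> K"
  unfolding power_int_def by (auto simp: subfield_power subfield_inverse)

lemma subfield_sum: "(\<And>i. i \<in> S \<Longrightarrow> f i \<in> K) \<Longrightarrow> sum f S \<in> K"
  by (induction S rule: infinite_finite_induct) (auto simp: subfield_zero subfield_add)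

lemma subfield_of_nat: "of_nat k \<in> K"
  by (induction k) (auto simp: subfield_zero subfield_one subfield_add)

lemmas subfield_closed =
  subfield_zero subfield_one subfield_add subfield_mult subfield_uminus subfield_inverse
  subfield_diff subfield_divide subfield_power subfield_power_int subfield_sum subfield_of_nat

text \<open>Gaussian elimination: a vector with nonzero last coordinate is used to clear the last
  coordinate of all the others.\<close>

lemma linear_relation_exists:
  assumes "finite J" "d < card J" "\<forall>j\<in>J. \<forall>i<d. w j i \<in> K"
  shows "\<exists>c. (\<forall>j\<in>J. c j \<in> K) \<and> (\<exists>j\<in>J. c j \<noteq> 0) \<and> (\<forall>i<d. (\<Sum>j\<in>J. c j * w j i) = 0)"
  using assms
proof (induction d arbitrary: J w)
  case 0
  then obtain j where "j \<in> J"
    by fastforce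
  then show ?case
    by (intro exI[of _ "\<lambda>_. 1"]) (auto simp: subfield_one)
next
  case (Suc d)
  show ?case
  proof (cases "\<forall>j\<in>J. w j d = 0")
    case True
    obtain c where c: "\<forall>j\<in>J. c j \<in> K" "\<exists>j\<in>J. c j \<noteq> 0" "\<forall>i<d. (\<Sum>j\<in>J. c j * w j i) = 0"
      using Suc.IH[of J w] Suc.prems by auto
    then have "\<forall>i<Suc d. (\<Sum>j\<in>J. c j * w j i) = 0"
      using True by (auto simp: less_Suc_eq)
    with c show ?thesis
      by blast
  next
    case False
    then obtain j0 where j0: "j0 \<in> J" "w j0 d \<noteq> 0"
      by blast
    define J' where "J' = J - {j0}"
    define w' where "w' j i = w j i - (w j d / w j0 d) * w j0 i" for j i
    have "finite J'" "d < card J'" "\<forall>j\<in>J'. \<forall>i<d. w' j i \<in> K"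
      using Suc.prems j0 by (auto simp: J'_def w'_def intro!: subfield_closed)
    then obtain c' where c': "\<forall>j\<in>J'. c' j \<in> K" "\<exists>j\<in>J'. c' j \<noteq> 0"
        "\<forall>i<d. (\<Sum>j\<in>J'. c' j * w' j i) = 0"
      using Suc.IH by blast
    define S where "S = (\<Sum>j\<in>J'. c' j * w j d)"
    define c where "c j = (if j = j0 then - S / w j0 d else c' j)" for j
    have "S \<in> K"
      unfolding S_def using c'(1) Suc.prems(3) by (auto simp: J'_def intro!: subfield_closed)
    then have cK: "\<forall>j\<in>J. c j \<in> K"
      using c'(1) Suc.prems(3) j0 by (auto simp: c_def J'_def intro!: subfield_closed)
    have cnz: "\<exists>j\<in>J. c j \<noteq> 0"
      using c'(2) by (auto simp: c_def J'_def)
    have split: "(\<Sum>j\<in>J. c j * w j i) = - S / w j0 d * w j0 i + (\<Sum>j\<in>J'. c' j * w j i)" for i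
    proof -
      have "(\<Sum>j\<in>J. c j * w j i) = c j0 * w j0 i + (\<Sum>j\<in>J'. c j * w j i)"
        using Suc.prems(1) j0 by (simp add: J'_def sum.remove)
      also have "(\<Sum>j\<in>J'. c j * w j i) = (\<Sum>j\<in>J'. c' j * w j i)"
        by (rule sum.cong) (auto simp: c_def J'_def)
      finally show ?thesis
        by (simp add: c_def)
    qed
    have "(\<Sum>j\<in>J. c j * w j i) = 0" if "i < Suc d" for i
    proof (cases "i = d")
      case True
      then show ?thesis
        unfolding split using j0 by (simp add: S_def)
    next
      case False
      then have "(\<Sum>j\<in>J'. c' j * w' j i) = 0"
        using c'(3) that by simp
      moreover have "(\<Sum>j\<in>J'. c' j * w' j i) = (\<Sum>j\<in>J'. c' j * w j i) - S / w j0 d * w j0 i"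
        unfolding w'_def S_def
        by (simp add: right_diff_distrib sum_subtractf sum_distrib_right sum_divide_distrib mult.assoc)
      ultimately show ?thesis
        unfolding split by (simp add: algebra_simps)
    qed
    with cK cnz show ?thesis
      by blast
  qed
qed

text \<open>The coordinate vectors of \<open>z_0, \<dots>, z_(d-1), y\<close> in a basis are dependent, and
  independence of the \<open>z_j\<close> forces the coefficient of \<open>y\<close> in the relation to be nonzero.\<close>

lemma independent_imp_spanning:
  assumes degree: "ext_degree_eq K d"
    and indep: "\<forall>a. (\<forall>j<d. a j \<in> K) \<longrightarrow> (\<Sum>j<d. a j * z j) = 0 \<longrightarrow> (\<forall>j<d. a j = 0)"
  shows "\<exists>a. (\<forall>j<d. a j \<in> K) \<and> y = (\<Sum>j<d. a j * z j)"
proof -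
  from degree obtain e :: "nat \<Rightarrow> 'a" where
    e: "\<forall>x. \<exists>!c. (\<forall>i. c i \<in> K) \<and> (\<forall>i\<ge>d. c i = 0) \<and> x = (\<Sum>i<d. c i * e i)"
    unfolding ext_degree_eq_def by (elim exE)
  have "\<forall>x. \<exists>c. (\<forall>i. c i \<in> K) \<and> (\<Sum>i<d. c i * e i) = x"
  proof
    fix x
    obtain c where "(\<forall>i. c i \<in> K) \<and> (\<forall>i\<ge>d. c i = 0) \<and> x = (\<Sum>i<d. c i * e i)"
      using ex1_implies_ex[OF e[rule_format, of x]] by (elim exE)
    then show "\<exists>c. (\<forall>i. c i \<in> K) \<and> (\<Sum>i<d. c i * e i) = x"
      by (intro exI[of _ c]) simp
  qed
  then obtain coord where coord: "\<forall>x. (\<forall>i. coord x i \<in> K) \<and> (\<Sum>i<d. coord x i * e i) = x"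
    by (rule choice[THEN exE])
  then have coord_K: "\<And>x i. coord x i \<in> K" and coord_sum: "\<And>x. (\<Sum>i<d. coord x i * e i) = x"
    by blast+
  define z' where "z' j = (if j < d then z j else y)" for j
  obtain c where c: "\<forall>j\<in>{..d}. c j \<in> K" "\<exists>j\<in>{..d}. c j \<noteq> 0"
      "\<forall>i<d. (\<Sum>j\<le>d. c j * coord (z' j) i) = 0"
    using linear_relation_exists[of "{..d}" d "\<lambda>j i. coord (z' j) i"] coord_K by auto
  have "(\<Sum>j\<le>d. c j * z' j) = (\<Sum>j\<le>d. c j * (\<Sum>i<d. coord (z' j) i * e i))"
    by (simp only: coord_sum)
  also have "\<dots> = (\<Sum>j\<le>d. \<Sum>i<d. c j * coord (z' j) i * e i)"
    by (simp add: sum_distrib_left mult.assoc)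
  also have "\<dots> = (\<Sum>i<d. (\<Sum>j\<le>d. c j * coord (z' j) i) * e i)"
    by (subst sum.swap) (simp add: sum_distrib_right)
  also have "\<dots> = 0"
    using c(3) by simp
  finally have rel: "(\<Sum>j<d. c j * z j) + c d * y = 0"
    by (simp add: z'_def lessThan_Suc_atMost[symmetric])
  have "c d \<noteq> 0"
  proof
    assume "c d = 0"
    then have "(\<Sum>j<d. c j * z j) = 0"
      using rel by simp
    then have "\<forall>j<d. c j = 0"
      using indep c(1) by auto
    with \<open>c d = 0\<close> c(2) show False
      by (auto simp: le_less)
  qed
  have cy: "c d * y = - (\<Sum>j<d. c j * z j)"
    using rel by (simp add: eq_neg_iff_add_eq_0 add.commute)
  have "y = (c d * y) / c d"
    using \<open>c d \<noteq> 0\<close> by simp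
  also have "\<dots> = - (\<Sum>j<d. c j * z j) / c d"
    by (simp only: cy)
  also have "\<dots> = (\<Sum>j<d. (- c j / c d) * z j)"
    by (simp add: sum_divide_distrib sum_negf)
  finally have "y = (\<Sum>j<d. (- c j / c d) * z j)" .
  moreover have "\<forall>j<d. - c j / c d \<in> K"
    using c(1) by (auto intro!: subfield_closed)
  ultimately show ?thesis
    by (intro exI[of _ "\<lambda>j. - c j / c d"]) simp
qed

end

text \<open>The nonzero terms \<open>a_j z^j\<close> have valuations pairwise incongruent modulo the
  ramification index \<open>d\<close>, so they cannot cancel.\<close>

lemma powers_linearly_independent:
  fixes K :: "'a::field set"
  assumes val: "normalized_discrete_valuation v" and ram: "totally_ramified_index v K d"
    and z: "z \<noteq> 0" "coprime (v z) (int d)"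
    and "\<forall>j<d. a j \<in> K" "(\<Sum>j<d. a j * z ^ j) = 0"
  shows "\<forall>j<d. a j = 0"
proof (rule ccontr)
  assume "\<not> (\<forall>j<d. a j = 0)"
  then have ex: "\<exists>j\<in>{..<d}. a j * z ^ j \<noteq> 0"
    using z by auto
  have val_K: "int d dvd v (a j)" if "j < d" "a j \<noteq> 0" for j
  proof -
    have "v (a j) \<in> {v x | x. x \<in> K \<and> x \<noteq> 0}"
      using that assms(5) by blast
    then show ?thesis
      using ram unfolding totally_ramified_index_def by auto
  qed
  have "inj_on (\<lambda>j. v (a j * z ^ j)) {j\<in>{..<d}. a j * z ^ j \<noteq> 0}"
  proof (rule inj_onI)
    fix j k
    assume j: "j \<in> {j\<in>{..<d}. a j * z ^ j \<noteq> 0}" and k: "k \<in> {j\<in>{..<d}. a j * z ^ j \<noteq> 0}"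
      and eq: "v (a j * z ^ j) = v (a k * z ^ k)"
    then have "(int k - int j) * v z = v (a j) - v (a k)"
      using z by (simp add: val_mult[OF val] val_power[OF val] algebra_simps)
    moreover have "int d dvd v (a j) - v (a k)"
      using val_K j k by auto
    ultimately have "int d dvd (int k - int j) * v z"
      by simp
    then have "int d dvd int k - int j"
      using z(2) coprime_dvd_mult_left_iff[of "int d" "v z"] by (simp add: coprime_commute)
    moreover have "\<bar>int k - int j\<bar> < int d"
      using j k by auto
    ultimately have "int k - int j = 0"
      using dvd_imp_le_int[of "int k - int j" "int d"] by fastforce
    then show "j = k"
      by simp
  qed
  from sum_nonzero_if_val_inj[OF val _ ex this] assms(6) show False
    by simp
qed

section \<open>Powers of a uniformizer\<close>

definition poly_over :: "'a::field set \<Rightarrow> 'a poly \<Rightarrow> bool" where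
  "poly_over K f \<longleftrightarrow> (\<forall>i. coeff f i \<in> K)"

lemma poly_over_div_monic:
  fixes K :: "'a::field set"
  assumes subfield: "is_subfield K"
    and g: "poly_over K g" "lead_coeff g = 1" "0 < degree g"
  shows "poly_over K f \<Longrightarrow> \<exists>q r. poly_over K r \<and> f = q * g + r \<and> degree r < degree g"
proof (induction "degree f" arbitrary: f rule: less_induct)
  case less
  show ?case
  proof (cases "degree f < degree g")
    case True
    then show ?thesis
      using less.prems by (intro exI[of _ 0] exI[of _ f]) simp
  next
    case False
    define k where "k = degree f - degree g"
    define f' where "f' = f - monom (lead_coeff f) k * g"
    have "poly_over K f'"
      using less.prems g(1) unfolding poly_over_def f'_def
      by (auto simp: coeff_monom_mult intro!: subfield_closed[OF subfield])
    have df: "degree f = k + degree g"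
      using False by (simp add: k_def)
    have "coeff f' i = 0" if "i > degree f - 1" for i
    proof (cases "i = degree f")
      case True
      then show ?thesis
        using g(2) df by (simp add: f'_def coeff_monom_mult)
    next
      case False
      with that have "degree f < i"
        by auto
      then show ?thesis
        using df by (simp add: f'_def coeff_monom_mult coeff_eq_0)
    qed
    then have "degree f' < degree f"
      using False g(3) degree_le[of "degree f - 1" f'] by fastforce
    then obtain q r where qr: "poly_over K r" "f' = q * g + r" "degree r < degree g"
      using less.hyps \<open>poly_over K f'\<close> by blast
    then have "f = (q + monom (lead_coeff f) k) * g + r"
      by (simp add: f'_def algebra_simps)
    with qr(1,3) show ?thesis
      by blast
  qed
qed

lemma factor_of_linear_power:
  fixes c :: "'a::field"
  shows "F * U = [:- c, 1:] ^ k \<Longrightarrow> \<exists>a j. F = smult a ([:- c, 1:] ^ j)"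
proof (induction k arbitrary: F U)
  case 0
  then have "degree F = 0"
    using degree_mult_eq[of F U] by (cases "F = 0 \<or> U = 0") auto
  then obtain a where "F = [:a:]"
    by (metis degree_eq_zeroE)
  then show ?case
    by (intro exI[of _ a] exI[of _ 0]) simp
next
  case (Suc k)
  let ?l = "[:- c, 1:]"
  have cancel: "F' * U' = ?l ^ k" if "?l * (F' * U') = F * U" for F' U'
  proof -
    have "?l * (F' * U') = ?l * ?l ^ k"
      using that Suc.prems by (simp only: power_Suc)
    then show ?thesis
      by (metis mult_left_cancel pCons_eq_0_iff zero_neq_one)
  qed
  have "poly F c = 0 \<or> poly U c = 0"
    using arg_cong[OF Suc.prems, of "\<lambda>f. poly f c"] by simp
  then show ?case
  proof
    assume "poly F c = 0"
    then obtain F' where F': "F = ?l * F'"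
      by (metis dvdE poly_eq_0_iff_dvd)
    then have "?l * (F' * U) = F * U"
      by (simp only: mult.assoc)
    then obtain a j where "F' = smult a (?l ^ j)"
      using Suc.IH cancel by blast
    then have "F = smult a (?l ^ Suc j)"
      using F' by (simp add: mult_smult_right)
    then show ?case
      by blast
  next
    assume "poly U c = 0"
    then obtain U' where "U = ?l * U'"
      by (metis dvdE poly_eq_0_iff_dvd)
    then have "?l * (F * U') = F * U"
      by (simp only: mult.left_commute)
    then show ?case
      using Suc.IH cancel by blast
  qed
qed

lemma minimal_poly_dvd:
  fixes K :: "'a::field set"
  assumes subfield: "is_subfield K"
    and g: "poly_over K g" "lead_coeff g = 1" "0 < degree g" "poly g z = 0"
    and indep: "\<forall>a. (\<forall>j<degree g. a j \<in> K) \<longrightarrow> (\<Sum>j<degree g. a j * z ^ j) = 0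
                  \<longrightarrow> (\<forall>j<degree g. a j = 0)"
    and h: "poly_over K h" "poly h z = 0"
  shows "g dvd h"
proof -
  obtain q r where qr: "poly_over K r" "h = q * g + r" "degree r < degree g"
    using poly_over_div_monic[OF subfield g(1-3) h(1)] by blast
  have "poly r z = (\<Sum>i\<le>degree r. coeff r i * z ^ i)"
    by (rule poly_altdef)
  also have "\<dots> = (\<Sum>i<degree g. coeff r i * z ^ i)"
    using qr(3) by (intro sum.mono_neutral_left) (auto simp: coeff_eq_0)
  finally have "(\<Sum>i<degree g. coeff r i * z ^ i) = 0"
    using qr(2) g(4) h(2) by simp
  then have "\<forall>i<degree g. coeff r i = 0"
    using indep qr(1) unfolding poly_over_def by simp
  then have "r = 0"
    using qr(3) by (metis coeff_eq_0 leading_coeff_0_iff not_le)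
  with qr(2) show ?thesis
    by simp
qed

lemma uniformizer_power_in_subfield:
  fixes K :: "'a::field set" and \<pi> :: 'a
  assumes prime: "prime p" and char: "of_nat p = (0::'a)"
    and subfield: "is_subfield K" and val: "normalized_discrete_valuation v"
    and ram: "totally_ramified_index v K (p ^ n)" and degree: "ext_degree_eq K (p ^ n)"
    and insep: "purely_inseparable K p"
    and \<pi>: "\<pi> \<noteq> 0" "v \<pi> = 1"
  shows "\<pi> ^ (p ^ n) \<in> K"
proof -
  define d where "d = p ^ n"
  have d: "0 < d"
    using prime by (simp add: d_def prime_gt_0_nat)
  have indep: "\<forall>a. (\<forall>j<d. a j \<in> K) \<longrightarrow> (\<Sum>j<d. a j * \<pi> ^ j) = 0 \<longrightarrow> (\<forall>j<d. a j = 0)"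
    using powers_linearly_independent[OF val ram[folded d_def] \<pi>(1)] \<pi>(2) by simp
  obtain a where a: "\<forall>j<d. a j \<in> K" "\<pi> ^ d = (\<Sum>j<d. a j * \<pi> ^ j)"
    using independent_imp_spanning[OF subfield degree[folded d_def] indep] by blast
  define g where "g = monom 1 d - (\<Sum>j<d. monom (a j) j)"
  have coeff_g: "coeff g i = (if i = d then 1 else if i < d then - a i else 0)" for i
    by (auto simp: g_def coeff_monom coeff_sum)
  have "degree g = d"
    by (rule antisym; (rule degree_le le_degree)) (simp_all add: coeff_g)
  then have g: "poly_over K g" "degree g = d" "lead_coeff g = 1"
    using a(1) coeff_g unfolding poly_over_def by (auto intro!: subfield_closed[OF subfield])
  have "poly g \<pi> = 0"
    using a(2) by (simp add: g_def poly_sum poly_monom)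
  obtain M where M: "\<pi> ^ p ^ M \<in> K"
    using insep unfolding purely_inseparable_def by blast
  have h: "[:- \<pi>, 1:] ^ p ^ M = monom 1 (p ^ M) - [:\<pi> ^ p ^ M:]"
    by (rule linear_power_prime_power[OF prime char])
  have "g dvd [:- \<pi>, 1:] ^ p ^ M"
  proof (rule minimal_poly_dvd[OF subfield g(1)])
    show "poly_over K ([:- \<pi>, 1:] ^ p ^ M)"
      unfolding h poly_over_def using M
      by (auto simp: coeff_monom coeff_pCons' intro!: subfield_closed[OF subfield])
  qed (use g d \<open>poly g \<pi> = 0\<close> indep prime in \<open>simp_all add: prime_gt_0_nat\<close>)
  then obtain U where "g * U = [:- \<pi>, 1:] ^ p ^ M"
    by (metis dvdE)
  then obtain c m where gcm: "g = smult c ([:- \<pi>, 1:] ^ m)"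
    using factor_of_linear_power by blast
  have "lead_coeff g = c"
    unfolding gcm lead_coeff_smult lead_coeff_power by simp
  with gcm g(3) have "g = [:- \<pi>, 1:] ^ d"
    using g(2) by (simp add: degree_linear_power)
  then have "coeff g 0 = - (\<pi> ^ d)"
    using linear_power_prime_power[OF prime char, of \<pi> n] d by (simp add: d_def coeff_monom)
  then have "\<pi> ^ d = a 0"
    using coeff_g[of 0] d by simp
  with a(1) d show ?thesis
    by (simp add: d_def)
qed

section \<open>Hasse derivatives with respect to a power basis\<close>

lemma K_linear_sum:
  assumes "K_linear K f" "\<And>k. k \<in> S \<Longrightarrow> c k \<in> K"
  shows "f (\<Sum>k\<in>S. c k * z k) = (\<Sum>k\<in>S. c k * f (z k))"
proof -
  have "f 0 = 0"
    using assms(1) unfolding K_linear_def by (metis add_cancel_right_right add_0)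
  with assms show ?thesis
    by (induction S rule: infinite_finite_induct) (simp_all add: K_linear_def)
qed

lemma sum_delta_mult:
  fixes F :: "nat \<Rightarrow> 'b::comm_ring_1"
  assumes "k < d"
  shows "(\<Sum>j<d. (if j = k then 1 else 0) * F j) = F k"
proof -
  have "(\<Sum>j<d. (if j = k then 1 else 0) * F j) = (\<Sum>j<d. if j = k then F j else 0)"
    by (rule sum.cong) simp_all
  then show ?thesis
    using assms by (simp add: sum.delta)
qed

lemma choose_mult_choose_diff:
  "(k choose j) * ((k - j) choose i) = ((i + j) choose j) * (k choose (i + j))"
proof (cases "i + j \<le> k")
  case True
  then show ?thesis
    using choose_mult[of j "i + j" k] by (simp add: mult.commute)
next
  case False
  then show ?thesis
    by (cases "j \<le> k") (auto simp: binomial_eq_0)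
qed

text \<open>The Leibniz rule for the operators \<open>x^a \<mapsto> (a choose r) x^(a-r)\<close>, i.e.\ Vandermonde's
  identity.\<close>

lemma leibniz_monomials:
  fixes x :: "'a::field"
  shows "(\<Sum>j\<le>r. of_nat (a choose j) * of_nat (b choose (r - j)) * (x ^ (a - j) * x ^ (b - (r - j))))
         = of_nat ((a + b) choose r) * x ^ (a + b - r)"
proof -
  have "of_nat (a choose j) * of_nat (b choose (r - j)) * (x ^ (a - j) * x ^ (b - (r - j)))
      = of_nat ((a choose j) * (b choose (r - j))) * x ^ (a + b - r)" if "j \<le> r" for j
  proof (cases "j \<le> a \<and> r - j \<le> b")
    case True
    with that have "a - j + (b - (r - j)) = a + b - r"
      by auto
    then show ?thesis
      by (simp add: power_add[symmetric])
  next
    case False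
    then show ?thesis
      by (auto simp: binomial_eq_0)
  qed
  then have "(\<Sum>j\<le>r. of_nat (a choose j) * of_nat (b choose (r - j)) * (x ^ (a - j) * x ^ (b - (r - j))))
      = (\<Sum>j\<le>r. of_nat ((a choose j) * (b choose (r - j))) * x ^ (a + b - r))"
    by (intro sum.cong) auto
  also have "\<dots> = of_nat ((a + b) choose r) * x ^ (a + b - r)"
    by (simp only: of_nat_sum[symmetric] sum_distrib_right[symmetric] vandermonde)
  finally show ?thesis .
qed

text \<open>The action of \<open>\<A>(n)\<close>: \<open>t_i\<close> acts as the \<open>i\<close>-th Hasse derivative with respect to
  the generator \<open>x\<close>, i.e.\ as \<open>(d/dx)^i / i!\<close>.\<close>

locale power_basis =
  fixes K :: "'a::field set" and p n :: nat and x :: 'a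
  assumes subfield: "is_subfield K" and prime: "prime p" and char: "of_nat p = (0::'a)"
    and x_nonzero: "x \<noteq> 0" and x_power_in_K: "x ^ (p ^ n) \<in> K"
    and independent: "\<forall>a. (\<forall>j<p ^ n. a j \<in> K) \<longrightarrow> (\<Sum>j<p ^ n. a j * x ^ j) = 0
                        \<longrightarrow> (\<forall>j<p ^ n. a j = 0)"
    and spanning: "\<forall>y. \<exists>a. (\<forall>j<p ^ n. a j \<in> K) \<and> y = (\<Sum>j<p ^ n. a j * x ^ j)"
begin

abbreviation "d \<equiv> p ^ n"

lemma d_pos: "0 < d"
  using prime by (simp add: prime_gt_0_nat)

definition coord :: "'a \<Rightarrow> nat \<Rightarrow> 'a" where
  "coord y = (SOME a. (\<forall>j. a j \<in> K) \<and> (\<Sum>j<d. a j * x ^ j) = y)"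

lemma coord_exists: "\<exists>a. (\<forall>j. a j \<in> K) \<and> (\<Sum>j<d. a j * x ^ j) = y"
proof -
  obtain a where a: "\<forall>j<d. a j \<in> K" "y = (\<Sum>j<d. a j * x ^ j)"
    using spanning by blast
  then show ?thesis
    by (intro exI[of _ "\<lambda>j. if j < d then a j else 0"]) (simp add: subfield_zero[OF subfield])
qed

lemma coord: "(\<forall>j. coord y j \<in> K) \<and> (\<Sum>j<d. coord y j * x ^ j) = y"
  unfolding coord_def by (rule someI_ex[OF coord_exists])

lemma coord_in_K: "coord y j \<in> K"
  and coord_expansion: "(\<Sum>j<d. coord y j * x ^ j) = y"
  using coord by blast+

lemma coord_unique:
  assumes "\<forall>j<d. b j \<in> K" "y = (\<Sum>j<d. b j * x ^ j)"
  shows "\<forall>j<d. coord y j = b j"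
proof -
  have "(\<Sum>j<d. (coord y j - b j) * x ^ j) = 0"
    using assms(2) coord_expansion[of y] by (simp add: algebra_simps sum_subtractf)
  moreover have "\<forall>j<d. coord y j - b j \<in> K"
    using assms(1) coord_in_K by (simp add: subfield_diff[OF subfield])
  ultimately show ?thesis
    using independent by auto
qed

lemma coord_add: "j < d \<Longrightarrow> coord (y + z) j = coord y j + coord z j"
  using coord_unique[of "\<lambda>j. coord y j + coord z j" "y + z"] coord_in_K coord_expansion
  by (simp add: subfield_add[OF subfield] algebra_simps sum.distrib)

lemma coord_scale: "c \<in> K \<Longrightarrow> j < d \<Longrightarrow> coord (c * y) j = c * coord y j"
proof -
  assume c: "c \<in> K" and j: "j < d"
  have "c * y = c * (\<Sum>j<d. coord y j * x ^ j)"
    by (simp only: coord_expansion)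
  also have "\<dots> = (\<Sum>j<d. c * coord y j * x ^ j)"
    by (simp add: sum_distrib_left mult.assoc)
  finally have "c * y = (\<Sum>j<d. c * coord y j * x ^ j)" .
  with c j show ?thesis
    using coord_unique[of "\<lambda>j. c * coord y j" "c * y"] coord_in_K
    by (simp add: subfield_mult[OF subfield])
qed

lemma coord_power: "k < d \<Longrightarrow> j < d \<Longrightarrow> coord (x ^ k) j = (if j = k then 1 else 0)"
  using coord_unique[of "\<lambda>j. if j = k then 1 else 0" "x ^ k"] sum_delta_mult[of k d "\<lambda>j. x ^ j"]
  by (simp add: subfield_zero[OF subfield] subfield_one[OF subfield])

definition hasse :: "nat \<Rightarrow> 'a \<Rightarrow> 'a" where
  "hasse i y = (\<Sum>j<d. coord y j * (of_nat (j choose i) * x ^ (j - i)))"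

lemma hasse_K_linear: "K_linear K (hasse i)"
  unfolding K_linear_def hasse_def
  by (simp add: coord_add coord_scale algebra_simps sum.distrib sum_distrib_left)

lemma hasse_power_below: "k < d \<Longrightarrow> hasse i (x ^ k) = of_nat (k choose i) * x ^ (k - i)"
proof -
  assume k: "k < d"
  have "hasse i (x ^ k) = (\<Sum>j<d. (if j = k then 1 else 0) * (of_nat (j choose i) * x ^ (j - i)))"
    unfolding hasse_def using k by (intro sum.cong) (auto simp: coord_power)
  then show ?thesis
    using sum_delta_mult[OF k, of "\<lambda>j. of_nat (j choose i) * x ^ (j - i)"] by simp
qed

text \<open>The formula extends to all powers of \<open>x\<close>, since \<open>x^d \<in> K\<close> and
  \<open>(q d + m choose i) = (m choose i)\<close> in characteristic \<open>p\<close> for \<open>i < d\<close>.\<close>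

lemma hasse_power: "i < d \<Longrightarrow> hasse i (x ^ m) = of_nat (m choose i) * x ^ (m - i)"
proof -
  assume i: "i < d"
  define q r where "q = m div d" and "r = m mod d"
  have m: "m = q * d + r"
    unfolding q_def r_def by (rule div_mult_mod_eq[symmetric])
  have r: "r < d"
    using d_pos by (simp add: r_def)
  have choose: "(of_nat (m choose i) :: 'a) = of_nat (r choose i)"
    unfolding m by (rule of_nat_choose_add_multiple[OF prime char i])
  have "x ^ m = (x ^ d) ^ q * x ^ r"
    unfolding m power_add power_mult[symmetric] by (simp add: mult.commute)
  then have "hasse i (x ^ m) = (x ^ d) ^ q * hasse i (x ^ r)"
    using hasse_K_linear[of i] subfield_power[OF subfield x_power_in_K] unfolding K_linear_def by simp
  also have "\<dots> = (x ^ d) ^ q * (of_nat (r choose i) * x ^ (r - i))"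
    by (simp add: hasse_power_below r)
  also have "\<dots> = of_nat (m choose i) * x ^ (m - i)"
  proof (cases "i \<le> r")
    case True
    then have "m - i = d * q + (r - i)"
      by (simp add: m mult.commute)
    then show ?thesis
      by (simp add: choose power_add power_mult)
  next
    case False
    then show ?thesis
      by (simp add: choose binomial_eq_0)
  qed
  finally show ?thesis .
qed

lemma hasse_expansion: "hasse i y = (\<Sum>k<d. coord y k * hasse i (x ^ k))"
  unfolding hasse_def[of i y] by (intro sum.cong refl) (simp add: hasse_power_below)

lemma hasse_hasse:
  "hasse i (hasse j y) = (if i + j < d then of_nat ((i + j) choose j) * hasse (i + j) y else 0)"
proof -
  have "hasse i (hasse j y) = (\<Sum>k<d. (coord y k * of_nat (k choose j)) * hasse i (x ^ (k - j)))"
    unfolding hasse_def[of j] mult.assoc[symmetric]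
    by (rule K_linear_sum[OF hasse_K_linear]) (auto intro: subfield_closed[OF subfield] coord_in_K)
  also have "\<dots> = of_nat ((i + j) choose j) *
      (\<Sum>k<d. coord y k * (of_nat (k choose (i + j)) * x ^ (k - (i + j))))"
    unfolding sum_distrib_left
  proof (rule sum.cong[OF refl])
    fix k assume "k \<in> {..<d}"
    then have "hasse i (x ^ (k - j)) = of_nat ((k - j) choose i) * x ^ (k - (i + j))"
      by (simp add: hasse_power_below diff_diff_add add.commute)
    moreover have "(of_nat (k choose j) :: 'a) * of_nat ((k - j) choose i)
        = of_nat ((i + j) choose j) * of_nat (k choose (i + j))"
      by (metis choose_mult_choose_diff of_nat_mult)
    ultimately show "coord y k * of_nat (k choose j) * hasse i (x ^ (k - j))
        = of_nat ((i + j) choose j) * (coord y k * (of_nat (k choose (i + j)) * x ^ (k - (i + j))))"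
      by (simp add: algebra_simps)
  qed
  also have "\<dots> = (if i + j < d then of_nat ((i + j) choose j) * hasse (i + j) y else 0)"
    by (auto simp: hasse_def binomial_eq_0 intro!: sum.neutral)
  finally show ?thesis .
qed

lemma hasse_0: "hasse 0 y = y"
  unfolding hasse_def using coord_expansion[of y] by simp

lemma hasse_one: "hasse r 1 = (if r = 0 then 1 else 0)"
  using hasse_power_below[OF d_pos, of r] by (cases r) auto

lemma hasse_mult:
  assumes r: "r < d"
  shows "hasse r (s * t) = (\<Sum>j\<le>r. hasse j s * hasse (r - j) t)"
proof -
  have s_t: "s * t = (\<Sum>a<d. coord s a * (x ^ a * t))"
  proof -
    have "s * t = (\<Sum>a<d. coord s a * x ^ a) * t"
      by (simp only: coord_expansion)
    also have "\<dots> = (\<Sum>a<d. coord s a * (x ^ a * t))"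
      by (simp add: sum_distrib_right mult.assoc)
    finally show ?thesis .
  qed
  have x_t: "x ^ a * t = (\<Sum>b<d. coord t b * x ^ (a + b))" for a
  proof -
    have "x ^ a * t = x ^ a * (\<Sum>b<d. coord t b * x ^ b)"
      by (simp only: coord_expansion)
    also have "\<dots> = (\<Sum>b<d. coord t b * x ^ (a + b))"
      by (simp add: sum_distrib_left power_add algebra_simps)
    finally show ?thesis .
  qed
  have "hasse r (s * t) = (\<Sum>a<d. coord s a * hasse r (x ^ a * t))"
    unfolding s_t by (rule K_linear_sum[OF hasse_K_linear]) (rule coord_in_K)
  also have "\<dots> = (\<Sum>a<d. \<Sum>b<d. coord s a * coord t b *
      (of_nat ((a + b) choose r) * x ^ (a + b - r)))"
  proof (rule sum.cong[OF refl])
    fix a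
    have "hasse r (x ^ a * t) = (\<Sum>b<d. coord t b * hasse r (x ^ (a + b)))"
      unfolding x_t by (rule K_linear_sum[OF hasse_K_linear]) (rule coord_in_K)
    then show "coord s a * hasse r (x ^ a * t) = (\<Sum>b<d. coord s a * coord t b *
        (of_nat ((a + b) choose r) * x ^ (a + b - r)))"
      by (simp add: hasse_power r sum_distrib_left mult.assoc)
  qed
  also have "\<dots> = (\<Sum>a<d. \<Sum>b<d. coord s a * coord t b *
      (\<Sum>j\<le>r. of_nat (a choose j) * of_nat (b choose (r - j)) * (x ^ (a - j) * x ^ (b - (r - j)))))"
    by (simp only: leibniz_monomials)
  also have "\<dots> = (\<Sum>a<d. \<Sum>b<d. \<Sum>j\<le>r. (coord s a * (of_nat (a choose j) * x ^ (a - j))) *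
      (coord t b * (of_nat (b choose (r - j)) * x ^ (b - (r - j)))))"
    by (simp add: sum_distrib_left algebra_simps)
  also have "\<dots> = (\<Sum>j\<le>r. \<Sum>a<d. \<Sum>b<d. (coord s a * (of_nat (a choose j) * x ^ (a - j))) *
      (coord t b * (of_nat (b choose (r - j)) * x ^ (b - (r - j)))))"
    by (subst sum.swap, rule sum.cong[OF refl], rule sum.swap)
  also have "\<dots> = (\<Sum>j\<le>r. hasse j s * hasse (r - j) t)"
    unfolding hasse_def by (simp add: sum_product)
  finally show ?thesis .
qed

text \<open>On the basis \<open>x^k\<close> the operators \<open>hasse i\<close> act by a unitriangular matrix, which
  gives the Hopf Galois property.\<close>

lemma sum_hasse_power:
  assumes k: "k < d"
  shows "(\<Sum>i<d. s i * hasse i (x ^ k)) = (\<Sum>i<k. s i * (of_nat (k choose i) * x ^ (k - i))) + s k"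
proof -
  have "(\<Sum>i<d. s i * hasse i (x ^ k)) = (\<Sum>i<d. s i * (of_nat (k choose i) * x ^ (k - i)))"
    using k by (simp add: hasse_power_below)
  also have "\<dots> = (\<Sum>i<Suc k. s i * (of_nat (k choose i) * x ^ (k - i)))"
    using k by (intro sum.mono_neutral_right) (auto simp: binomial_eq_0)
  finally show ?thesis
    by simp
qed

lemma triangular_solution_exists:
  "\<exists>s. \<forall>k\<le>N. f k = (\<Sum>i<k. s i * (of_nat (k choose i) * x ^ (k - i))) + s k"
proof (induction N)
  case 0
  show ?case
    by (intro exI[of _ "\<lambda>_. f 0"]) simp
next
  case (Suc N)
  then obtain s where s: "\<forall>k\<le>N. f k = (\<Sum>i<k. s i * (of_nat (k choose i) * x ^ (k - i))) + s k"
    by blast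
  define s' where "s' = s(Suc N := f (Suc N) -
      (\<Sum>i<Suc N. s i * (of_nat (Suc N choose i) * x ^ (Suc N - i))))"
  have "(\<Sum>i<k. s' i * (of_nat (k choose i) * x ^ (k - i))) =
      (\<Sum>i<k. s i * (of_nat (k choose i) * x ^ (k - i)))" if "k \<le> Suc N" for k
    using that by (intro sum.cong) (auto simp: s'_def)
  then have "\<forall>k\<le>Suc N. f k = (\<Sum>i<k. s' i * (of_nat (k choose i) * x ^ (k - i))) + s' k"
    using s by (auto simp: s'_def le_Suc_eq)
  then show ?case
    by blast
qed

lemma K_linear_as_hasse_combination:
  assumes f: "K_linear K f"
  shows "\<exists>s. \<forall>y. f y = (\<Sum>i<d. s i * hasse i y)"
proof -
  obtain s where s: "\<forall>k\<le>d - 1. f (x ^ k) = (\<Sum>i<k. s i * (of_nat (k choose i) * x ^ (k - i))) + s k"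
    using triangular_solution_exists[of "d - 1" "\<lambda>k. f (x ^ k)"] by blast
  have f_power: "f (x ^ k) = (\<Sum>i<d. s i * hasse i (x ^ k))" if "k < d" for k
    using s that sum_hasse_power[OF that, of s] by simp
  have "f y = (\<Sum>i<d. s i * hasse i y)" for y
  proof -
    have "f y = f (\<Sum>k<d. coord y k * x ^ k)"
      by (simp only: coord_expansion)
    also have "\<dots> = (\<Sum>k<d. coord y k * f (x ^ k))"
      by (rule K_linear_sum[OF f]) (rule coord_in_K)
    also have "\<dots> = (\<Sum>k<d. \<Sum>i<d. s i * (coord y k * hasse i (x ^ k)))"
      by (simp add: f_power sum_distrib_left algebra_simps)
    also have "\<dots> = (\<Sum>i<d. s i * (\<Sum>k<d. coord y k * hasse i (x ^ k)))"
      by (subst sum.swap) (simp add: sum_distrib_left)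
    also have "\<dots> = (\<Sum>i<d. s i * hasse i y)"
      by (simp only: hasse_expansion[symmetric])
    finally show ?thesis .
  qed
  then show ?thesis
    by blast
qed

lemma hasse_combination_unique:
  assumes eq: "\<forall>y. (\<Sum>i<d. s i * hasse i y) = (\<Sum>i<d. s' i * hasse i y)"
  shows "\<forall>i<d. s i = s' i"
proof -
  have "k < d \<longrightarrow> s k = s' k" for k
  proof (induction k rule: less_induct)
    case (less k)
    show ?case
    proof
      assume k: "k < d"
      have "(\<Sum>i<k. s i * (of_nat (k choose i) * x ^ (k - i))) =
          (\<Sum>i<k. s' i * (of_nat (k choose i) * x ^ (k - i)))"
        using less.IH k by (intro sum.cong) auto
      then show "s k = s' k"
        using eq[rule_format, of "x ^ k"] sum_hasse_power[OF k, of s] sum_hasse_power[OF k, of s']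
        by simp
    qed
  qed
  then show ?thesis
    by blast
qed

lemma hopf_galois: "An_hopf_galois K p n hasse"
  unfolding An_hopf_galois_def An_module_algebra_def An_action_def
  using hasse_K_linear hasse_0 hasse_hasse hasse_mult hasse_one K_linear_as_hasse_combination
    hasse_combination_unique
  by blast

end

section \<open>The scaffold\<close>

lemma sum_digits: "(\<Sum>k<n. digit p k s * p ^ k) = s mod p ^ n"
proof (induction n)
  case (Suc n)
  have "s mod p ^ Suc n = p ^ n * (s div p ^ n mod p) + s mod p ^ n"
    using mod_mult2_eq[of s "p ^ n" p] by (simp add: mult.commute)
  then show ?case
    using Suc by (simp add: digit_def mult.commute)
qed simp

lemma frak_b_const:
  assumes "s < p ^ n"
  shows "frak_b p n (\<lambda>_. b) s = b * int s"
proof -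
  have "frak_b p n (\<lambda>_. b) s = (\<Sum>k<n. int (digit p k s) * int (p ^ k) * b)"
    unfolding frak_b_def by (rule sum.reindex_bij_witness[of _ "\<lambda>k. n - k" "\<lambda>i. n - i"]) auto
  also have "\<dots> = b * int (\<Sum>k<n. digit p k s * p ^ k)"
    by (simp add: sum_distrib_left algebra_simps)
  finally show ?thesis
    using assms by (simp add: sum_digits)
qed

context
  fixes p n :: nat and b :: int
  assumes prime: "prime p" and coprime: "coprime b (int p)"
begin

lemma mult_mod_prime_power_inj:
  assumes "s1 < p ^ n" "s2 < p ^ n" "(b * int s1) mod int (p ^ n) = (b * int s2) mod int (p ^ n)"
  shows "s1 = s2"
proof -
  have "int (p ^ n) dvd b * (int s1 - int s2)"
    using assms(3) by (simp add: mod_eq_dvd_iff algebra_simps)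
  then have "int (p ^ n) dvd int s1 - int s2"
    using coprime coprime_dvd_mult_right_iff[of "int (p ^ n)" b] by (simp add: coprime_commute)
  moreover have "\<bar>int s1 - int s2\<bar> < int (p ^ n)"
    using assms(1,2) by linarith
  ultimately have "int s1 - int s2 = 0"
    using dvd_imp_le_int[of "int s1 - int s2" "int (p ^ n)"] by fastforce
  then show ?thesis
    by simp
qed

lemma mult_mod_prime_power_solvable: "\<exists>s. s < p ^ n \<and> (b * int s) mod int (p ^ n) = (- t) mod int (p ^ n)"
proof -
  obtain u v where "u * b + v * int (p ^ n) = gcd b (int (p ^ n))"
    using bezout_int by blast
  then have uv: "u * b = 1 - v * int (p ^ n)"
    using coprime by simp
  have pos: "int (p ^ n) > 0"
    using prime by (simp add: prime_gt_0_nat)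
  define s where "s = nat ((- t * u) mod int (p ^ n))"
  have s: "int s = (- t * u) mod int (p ^ n)"
    using pos by (simp add: s_def)
  have "(b * int s) mod int (p ^ n) = (- t * (u * b)) mod int (p ^ n)"
    unfolding s by (simp add: mod_mult_right_eq ac_simps)
  also have "\<dots> = (- t + (t * v) * int (p ^ n)) mod int (p ^ n)"
    unfolding uv by (simp add: algebra_simps)
  also have "\<dots> = (- t) mod int (p ^ n)"
    by (rule mod_mult_self1)
  finally have "(b * int s) mod int (p ^ n) = (- t) mod int (p ^ n)" .
  moreover have "s < p ^ n"
    using pos s by (metis of_nat_less_iff pos_mod_bound)
  ultimately show ?thesis
    by blast
qed

lemma frak_a_const:
  "frak_a p n (\<lambda>_. b) t < p ^ n \<and>
     (b * int (frak_a p n (\<lambda>_. b) t)) mod int (p ^ n) = (- t) mod int (p ^ n)"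
proof -
  obtain s where s: "s < p ^ n" "(b * int s) mod int (p ^ n) = (- t) mod int (p ^ n)"
    using mult_mod_prime_power_solvable by blast
  have "frak_a p n (\<lambda>_. b) t = s"
    unfolding frak_a_def
  proof (rule the_equality)
    show "s < p ^ n \<and> frak_b p n (\<lambda>_. b) s mod int (p ^ n) = - t mod int (p ^ n)"
      using s frak_b_const[OF s(1)] by simp
  next
    fix s' assume "s' < p ^ n \<and> frak_b p n (\<lambda>_. b) s' mod int (p ^ n) = - t mod int (p ^ n)"
    then show "s' = s"
      using s frak_b_const[of s' p n b] mult_mod_prime_power_inj[of s' s] by auto
  qed
  then show ?thesis
    using s by simp
qed

lemma frak_a_const_eqI:
  "s < p ^ n \<Longrightarrow> (b * int s) mod int (p ^ n) = (- t) mod int (p ^ n) \<Longrightarrow> frak_a p n (\<lambda>_. b) t = s"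
  using frak_a_const[of t] mult_mod_prime_power_inj[of "frak_a p n (\<lambda>_. b) t" s] by auto

end

text \<open>\<open>\<lambda>_t = x^\<a>(t) w^e(t)\<close> (\<open>\<a> = x_exp\<close>, \<open>e = w_exp\<close>), where \<open>e(t)\<close> is chosen so that
  \<open>v(\<lambda>_t) = -b \<a>(t) + p^n e(t) = t\<close>; this is possible because \<open>b \<a>(t) \<equiv> -t (mod p^n)\<close>.\<close>

locale scaffold_construction = power_basis +
  fixes v :: "'a \<Rightarrow> int" and b :: int and w :: 'a
  assumes val: "normalized_discrete_valuation v" and coprime_b: "coprime b (int p)"
    and val_x: "v x = - b" and w_in_K: "w \<in> K" and w_nonzero: "w \<noteq> 0" and val_w: "v w = int (p ^ n)"
begin

definition x_exp :: "int \<Rightarrow> nat" where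
  "x_exp t = frak_a p n (\<lambda>_. b) t"

definition w_exp :: "int \<Rightarrow> int" where
  "w_exp t = (t + b * int (x_exp t)) div int d"

definition lam :: "int \<Rightarrow> 'a" where
  "lam t = x ^ x_exp t * w powi w_exp t"

definition Psi :: "nat \<Rightarrow> nat \<Rightarrow> 'a" where
  "Psi i j = (if j = p ^ (n - i) then 1 else 0)"

lemma x_exp_less: "x_exp t < d" and x_exp_cong: "(b * int (x_exp t)) mod int d = (- t) mod int d"
  using frak_a_const[OF prime coprime_b, of n t] by (auto simp: x_exp_def)

lemma x_exp_eqI: "s < d \<Longrightarrow> (b * int s) mod int d = (- t) mod int d \<Longrightarrow> x_exp t = s"
  unfolding x_exp_def by (rule frak_a_const_eqI[OF prime coprime_b])

lemma w_exp_eq: "int d * w_exp t = t + b * int (x_exp t)"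
proof -
  have "int d dvd t + b * int (x_exp t)"
    using x_exp_cong[of t] by (simp add: mod_eq_dvd_iff add.commute)
  then show ?thesis
    by (simp add: w_exp_def)
qed

lemma lam_nonzero: "lam t \<noteq> 0"
  using x_nonzero w_nonzero by (simp add: lam_def)

lemma val_lam: "v (lam t) = t"
proof -
  have "v (lam t) = v (x ^ x_exp t) + v (w powi w_exp t)"
    unfolding lam_def using x_nonzero w_nonzero by (intro val_mult[OF val]) auto
  also have "\<dots> = int (x_exp t) * (- b) + w_exp t * int d"
    using x_nonzero w_nonzero by (simp add: val_power[OF val] val_power_int[OF val] val_x val_w)
  also have "\<dots> = t"
    using w_exp_eq[of t] by (simp add: algebra_simps)
  finally show ?thesis .
qed

lemma lam_ratio_in_K:
  assumes "t1 mod int d = t2 mod int d"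
  shows "lam t1 * inverse (lam t2) \<in> K"
proof -
  have "(- t1) mod int d = (- t2) mod int d"
    using assms by (metis mod_minus_eq)
  then have "x_exp t2 = x_exp t1"
    using x_exp_cong[of t1] x_exp_less[of t1] by (intro x_exp_eqI) simp_all
  then have "lam t1 * inverse (lam t2) = w powi w_exp t1 * inverse (w powi w_exp t2)"
    using x_nonzero by (simp add: lam_def)
  then show ?thesis
    using subfield w_in_K by (simp add: subfield_mult subfield_inverse subfield_power_int)
qed

lemma Psi_act: "1 \<le> i \<Longrightarrow> i \<le> n \<Longrightarrow> An_elem_act p n hasse (Psi i) y = hasse (p ^ (n - i)) y"
proof -
  assume "1 \<le> i" "i \<le> n"
  then have "p ^ (n - i) < d"
    using prime_gt_1_nat[OF prime] by (intro power_strict_increasing) auto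
  moreover have "An_elem_act p n hasse (Psi i) y = (\<Sum>j<d. if j = p ^ (n - i) then hasse j y else 0)"
    unfolding An_elem_act_def Psi_def by (rule sum.cong) simp_all
  ultimately show ?thesis
    by (simp add: sum.delta)
qed

lemma hasse_lam: "m < d \<Longrightarrow> hasse m (lam t) = w powi w_exp t * (of_nat (x_exp t choose m) * x ^ (x_exp t - m))"
proof -
  assume "m < d"
  have "hasse m (lam t) = w powi w_exp t * hasse m (x ^ x_exp t)"
    using hasse_K_linear[of m] subfield_power_int[OF subfield w_in_K]
    unfolding K_linear_def lam_def by (simp add: mult.commute)
  then show ?thesis
    by (simp add: hasse_power_below x_exp_less)
qed

text \<open>Since \<open>b (\<a>(t) - m) \<equiv> -(t + m b)\<close>, we get \<open>\<a>(t + m b) = \<a>(t) - m\<close>, and \<open>e\<close> is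
  unchanged.\<close>

lemma lam_shift:
  assumes "m \<le> x_exp t"
  shows "lam (t + int m * b) = x ^ (x_exp t - m) * w powi w_exp t"
proof -
  have "(b * int (x_exp t - m)) mod int d = (b * int (x_exp t) - int m * b) mod int d"
    using assms by (simp add: of_nat_diff algebra_simps)
  also have "\<dots> = ((- t) - int m * b) mod int d"
    using x_exp_cong[of t] by (rule mod_diff_cong) simp
  finally have x_exp_shift: "x_exp (t + int m * b) = x_exp t - m"
    using x_exp_less[of t] by (intro x_exp_eqI) (simp_all add: algebra_simps)
  then have "t + int m * b + b * int (x_exp (t + int m * b)) = t + b * int (x_exp t)"
    using assms by (simp add: of_nat_diff algebra_simps)
  then have "w_exp (t + int m * b) = w_exp t"
    unfolding w_exp_def by (simp only:)
  with x_exp_shift show ?thesis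
    by (simp add: lam_def)
qed

lemma scaffold: "An_scaffold_inf K v p n hasse (\<lambda>_. b) lam Psi"
  unfolding An_scaffold_inf_def
proof (intro conjI ballI allI impI)
  fix i assume "i \<in> {1..n}"
  then have i: "1 \<le> i" "i \<le> n"
    by auto
  define m where "m = p ^ (n - i)"
  have m: "m < d" "m \<noteq> 0"
    using i prime_gt_1_nat[OF prime] by (auto simp: m_def intro: power_strict_increasing)
  show "An_elem_act p n hasse (Psi i) 1 = 0"
    using Psi_act[OF i] hasse_one m by (simp add: m_def)
  fix t
  have act: "An_elem_act p n hasse (Psi i) (lam t) =
      of_nat (digit p (n - i) (x_exp t)) * (x ^ (x_exp t - m) * w powi w_exp t)"
    using Psi_act[OF i] hasse_lam[OF m(1)]
      of_nat_choose_prime_power_digit[OF prime char, of "x_exp t" "n - i"]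
    by (simp add: m_def ac_simps)
  show "An_elem_act p n hasse (Psi i) (lam t) = 0" if "digit p (n - i) (frak_a p n (\<lambda>_. b) t) = 0"
    using that act by (simp add: x_exp_def)
  assume "1 \<le> digit p (n - i) (frak_a p n (\<lambda>_. b) t)"
  then have digit: "0 < digit p (n - i) (x_exp t)"
    by (simp add: x_exp_def)
  then have "m \<le> x_exp t"
    by (auto simp: m_def digit_def intro: ccontr)
  define u where "u = (of_nat (digit p (n - i) (x_exp t)) :: 'a)"
  have "digit p (n - i) (x_exp t) < p"
    using prime by (simp add: digit_def prime_gt_0_nat)
  then have "u \<noteq> 0 \<and> v u = 0"
    unfolding u_def using val_of_nat_unit[OF val prime char digit] by blast
  moreover have "u \<in> K"
    unfolding u_def by (rule subfield_of_nat[OF subfield])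
  moreover have "An_elem_act p n hasse (Psi i) (lam t) = u * lam (t + int m * b)"
    using act lam_shift[OF \<open>m \<le> x_exp t\<close>] by (simp add: u_def)
  ultimately show "\<exists>u\<in>K. u \<noteq> 0 \<and> v u = 0 \<and>
      An_elem_act p n hasse (Psi i) (lam t) = u * lam (t + int (p ^ (n - i)) * b)"
    unfolding m_def by blast
qed (use coprime_b lam_nonzero val_lam lam_ratio_in_K subfield_zero[OF subfield]
       subfield_one[OF subfield] in \<open>auto simp: Psi_def\<close>)

end

lemma scaffold_construction_exists:
  fixes K :: "'a::field set"
  assumes prime: "prime p" and char: "of_nat p = (0::'a)"
    and subfield: "is_subfield K" and val: "normalized_discrete_valuation v"
    and ram: "totally_ramified_index v K (p ^ n)" and degree: "ext_degree_eq K (p ^ n)"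
    and insep: "purely_inseparable K p"
    and b: "0 < b" "coprime b (int p)"
  shows "\<exists>x w. scaffold_construction K p n x v b w"
proof -
  obtain \<pi> :: 'a where \<pi>: "\<pi> \<noteq> 0" "v \<pi> = 1"
    using val unfolding normalized_discrete_valuation_def by blast
  have \<pi>_power: "\<pi> ^ p ^ n \<in> K"
    by (rule uniformizer_power_in_subfield[OF prime char subfield val ram degree insep \<pi>])
  define x where "x = inverse \<pi> ^ nat b"
  have x: "x \<noteq> 0" "v x = - b"
    using \<pi> b(1) by (simp_all add: x_def val_power[OF val] val_inverse[OF val])
  have "x ^ p ^ n = inverse (\<pi> ^ p ^ n) ^ nat b"
    by (simp add: x_def power_inverse[symmetric] power_mult[symmetric] mult.commute)
  then have "x ^ p ^ n \<in> K"
    using \<pi>_power by (simp add: subfield_power[OF subfield] subfield_inverse[OF subfield])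
  moreover have indep: "\<forall>c. (\<forall>j<p ^ n. c j \<in> K) \<longrightarrow> (\<Sum>j<p ^ n. c j * x ^ j) = 0
      \<longrightarrow> (\<forall>j<p ^ n. c j = 0)"
    using powers_linearly_independent[OF val ram x(1)] x(2) b(2) by simp
  moreover have "\<forall>y. \<exists>c. (\<forall>j<p ^ n. c j \<in> K) \<and> y = (\<Sum>j<p ^ n. c j * x ^ j)"
    using independent_imp_spanning[OF subfield degree indep] by blast
  ultimately have "power_basis K p n x"
    using subfield prime char x(1) by unfold_locales
  moreover have "v (\<pi> ^ p ^ n) = int (p ^ n)"
    using \<pi> by (simp add: val_power[OF val])
  ultimately show ?thesis
    using val b(2) x(2) \<pi>_power \<pi>(1)
    by (intro exI[of _ x] exI[of _ "\<pi> ^ p ^ n"]) (simp add: scaffold_construction_def scaffold_construction_axioms_def)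
qed

theorem theorem5p1:
  fixes K :: "'a::field set" and v :: "'a \<Rightarrow> int" and p n :: nat and b :: int
  assumes "prime p" and "of_nat p = (0::'a)"
    and "is_subfield K"
    and "normalized_discrete_valuation v"
    and "val_complete v K"
    and "totally_ramified_index v K (p ^ n)"
    and "ext_degree_eq K (p ^ n)"
    and "purely_inseparable K p"
    and "0 < b" and "b < int (p ^ n)" and "coprime b (int p)"
  shows "\<exists>T. An_hopf_galois K p n T \<and>
           (\<exists>lam Psi. An_scaffold_inf K v p n T (\<lambda>_. b) lam Psi)"
proof -
  obtain x w where "scaffold_construction K p n x v b w"
    using scaffold_construction_exists assms(1-4,6-9,11) by blast
  then interpret scaffold_construction K p n x v b w .
  show ?thesis
    using hopf_galois scaffold by blast
qed

end
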